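(* Let $M$ be a matroid on $[n]$ and $\preceq$ a term order on $\mathbb{R}[x_1,\dots,x_n]$. Then $\mathcal{S}_\preceq(M)$ is a subcomplex of the independence complex $\mathcal{I}(M)$ of $M$.
   Context: $V_M=\{\mathbf{e}_B:B \text{ a basis of } M\}\subseteq\{0,1\}^n$ ($\mathbf{e}_B$ the characteristic vector). $\mathcal{S}_\preceq(M)=\{\tau\subseteq[n]:\prod_{i\in\tau}x_i\notin\mathrm{in}_\preceq(I(V_M))\}$, where $I(V_M)$ is the vanishing ideal of $V_M$ and $\mathrm{in}_\preceq$ the initial ideal. $\mathcal{I}(M)$ is the simplicial complex of independent sets of $M$. *)

theory Defs
  imports Complex_Main "HOL-Library.Poly_Mapping"
begin

text \<open>Monomials are exponent vectors finitely supported maps nat to nat,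
  polynomials over the reals are finitely supported maps from monomials to reals; the ring
  R[x_1,...,x_n] is the set of polynomials whose monomials only involve x_1..x_n.\<close>

type_synonym mon = "nat \<Rightarrow>\<^sub>0 nat"
type_synonym rpoly = "mon \<Rightarrow>\<^sub>0 real"

definition matroid :: "nat \<Rightarrow> nat set set \<Rightarrow> bool" where
  "matroid n \<I> \<longleftrightarrow>
     \<I> \<subseteq> Pow {1..n} \<and> {} \<in> \<I> \<and>
     (\<forall>A\<in>\<I>. \<forall>B. B \<subseteq> A \<longrightarrow> B \<in> \<I>) \<and>
     (\<forall>A\<in>\<I>. \<forall>B\<in>\<I>. card A < card B \<longrightarrow> (\<exists>x\<in>B - A. insert x A \<in> \<I>))"

definition bases :: "nat set set \<Rightarrow> nat set set" where
  "bases \<I> = {B \<in> \<I>. \<forall>A\<in>\<I>. B \<subseteq> A \<longrightarrow> A = B}"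

definition char_vec :: "nat set \<Rightarrow> (nat \<Rightarrow> real)" where
  "char_vec B = (\<lambda>i. if i \<in> B then 1 else 0)"

definition V_M :: "nat set set \<Rightarrow> (nat \<Rightarrow> real) set" where
  "V_M \<I> = char_vec ` bases \<I>"

definition mons :: "nat \<Rightarrow> mon set" where
  "mons n = {m. Poly_Mapping.keys m \<subseteq> {1..n}}"

definition polys :: "nat \<Rightarrow> rpoly set" where
  "polys n = {p. Poly_Mapping.keys p \<subseteq> mons n}"

definition var :: "nat \<Rightarrow> rpoly" where
  "var i = Poly_Mapping.single (Poly_Mapping.single i 1) 1"

definition mon_poly :: "mon \<Rightarrow> rpoly" where
  "mon_poly m = Poly_Mapping.single m 1"

definition eval_poly :: "rpoly \<Rightarrow> (nat \<Rightarrow> real) \<Rightarrow> real" where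
  "eval_poly p a = (\<Sum>m\<in>Poly_Mapping.keys p. Poly_Mapping.lookup p m * (\<Prod>i\<in>Poly_Mapping.keys m. a i ^ Poly_Mapping.lookup m i))"

definition term_order :: "nat \<Rightarrow> (mon \<Rightarrow> mon \<Rightarrow> bool) \<Rightarrow> bool" where
  "term_order n le \<longleftrightarrow>
     (\<forall>a\<in>mons n. le a a) \<and>
     (\<forall>a\<in>mons n. \<forall>b\<in>mons n. le a b \<and> le b a \<longrightarrow> a = b) \<and>
     (\<forall>a\<in>mons n. \<forall>b\<in>mons n. \<forall>c\<in>mons n. le a b \<and> le b c \<longrightarrow> le a c) \<and>
     (\<forall>a\<in>mons n. \<forall>b\<in>mons n. le a b \<or> le b a) \<and>
     (\<forall>a\<in>mons n. le 0 a) \<and>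
     (\<forall>a\<in>mons n. \<forall>b\<in>mons n. \<forall>c\<in>mons n. le a b \<longrightarrow> le (a + c) (b + c))"

definition lead_mon :: "(mon \<Rightarrow> mon \<Rightarrow> bool) \<Rightarrow> rpoly \<Rightarrow> mon" where
  "lead_mon le p = (THE m. m \<in> Poly_Mapping.keys p \<and> (\<forall>m'\<in>Poly_Mapping.keys p. le m' m))"

inductive_set ideal_gen :: "nat \<Rightarrow> rpoly set \<Rightarrow> rpoly set" for n G where
  zero: "0 \<in> ideal_gen n G"
| gen: "g \<in> G \<Longrightarrow> g \<in> ideal_gen n G"
| add: "a \<in> ideal_gen n G \<Longrightarrow> b \<in> ideal_gen n G \<Longrightarrow> a + b \<in> ideal_gen n G"
| mult: "p \<in> polys n \<Longrightarrow> a \<in> ideal_gen n G \<Longrightarrow> p * a \<in> ideal_gen n G"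

definition vanishing_ideal :: "nat \<Rightarrow> (nat \<Rightarrow> real) set \<Rightarrow> rpoly set" where
  "vanishing_ideal n V = {p \<in> polys n. \<forall>a\<in>V. eval_poly p a = 0}"

definition initial_ideal :: "nat \<Rightarrow> (mon \<Rightarrow> mon \<Rightarrow> bool) \<Rightarrow> rpoly set \<Rightarrow> rpoly set" where
  "initial_ideal n le I = ideal_gen n {mon_poly (lead_mon le f) | f. f \<in> I \<and> f \<noteq> 0}"

definition S_complex :: "nat \<Rightarrow> (mon \<Rightarrow> mon \<Rightarrow> bool) \<Rightarrow> nat set set \<Rightarrow> nat set set" where
  "S_complex n le \<I> =
     {\<tau>. \<tau> \<subseteq> {1..n} \<and> (\<Prod>i\<in>\<tau>. var i) \<notin> initial_ideal n le (vanishing_ideal n (V_M \<I>))}"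

definition simplicial_complex :: "nat set set \<Rightarrow> bool" where
  "simplicial_complex K \<longleftrightarrow> (\<forall>\<sigma>\<in>K. finite \<sigma> \<and> (\<forall>\<tau>. \<tau> \<subseteq> \<sigma> \<longrightarrow> \<tau> \<in> K))"

definition subcomplex :: "nat set set \<Rightarrow> nat set set \<Rightarrow> bool" where
  "subcomplex K L \<longleftrightarrow> simplicial_complex K \<and> K \<subseteq> L"

end

theory Submission
  imports Defs
begin

text \<open>If \<tau> \<subseteq> [n] is dependent, then no basis contains \<tau>, so the squarefree monomial
  x^\<tau> vanishes at every e_B and lies in I(V_M). Being a monomial it is its own leading
  monomial, hence x^\<tau> lies in the initial ideal and \<tau> is not a face of S(M). Downward
  closure of S(M) holds because multiples of elements of an ideal stay in the ideal.\<close>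

definition squarefree_mon :: "nat set \<Rightarrow> mon" where
  "squarefree_mon t = (\<Sum>i\<in>t. Poly_Mapping.single i 1)"

lemma lookup_squarefree_mon:
  "finite t \<Longrightarrow> Poly_Mapping.lookup (squarefree_mon t) i = (if i \<in> t then 1 else 0)"
  unfolding squarefree_mon_def lookup_sum by (simp add: lookup_single when_def)

lemma keys_squarefree_mon: "finite t \<Longrightarrow> Poly_Mapping.keys (squarefree_mon t) = t"
  by (auto simp: in_keys_iff lookup_squarefree_mon split: if_splits)

lemma squarefree_mon_in_mons: "t \<subseteq> {1..n} \<Longrightarrow> squarefree_mon t \<in> mons n"
  using finite_subset[of t "{1..n}"] by (simp add: mons_def keys_squarefree_mon)

lemma prod_var_eq_mon_poly: "finite t \<Longrightarrow> (\<Prod>i\<in>t. var i) = mon_poly (squarefree_mon t)"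
proof (induction t rule: finite_induct)
  case empty
  then show ?case
    by (simp add: squarefree_mon_def mon_poly_def one_poly_mapping.abs_eq single.abs_eq)
next
  case (insert x F)
  then show ?case by (simp add: squarefree_mon_def mon_poly_def var_def mult_single)
qed

lemma mon_poly_in_polys: "m \<in> mons n \<Longrightarrow> mon_poly m \<in> polys n"
  by (simp add: mon_poly_def polys_def)

lemma prod_var_in_polys: "t \<subseteq> {1..n} \<Longrightarrow> (\<Prod>i\<in>t. var i) \<in> polys n"
  using finite_subset[of t "{1..n}"]
  by (simp add: prod_var_eq_mon_poly mon_poly_in_polys squarefree_mon_in_mons)

lemma eval_prod_var_char_vec:
  assumes "finite t"
  shows "eval_poly (\<Prod>i\<in>t. var i) (char_vec B) = (if t \<subseteq> B then 1 else 0)"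
proof -
  have "eval_poly (\<Prod>i\<in>t. var i) (char_vec B) = (\<Prod>i\<in>t. char_vec B i)"
    using assms by (simp add: prod_var_eq_mon_poly mon_poly_def eval_poly_def
        keys_squarefree_mon lookup_squarefree_mon)
  also have "\<dots> = (if t \<subseteq> B then 1 else 0)"
    using assms by (auto simp: char_vec_def subset_eq intro!: prod.neutral)
  finally show ?thesis .
qed

lemma lead_mon_mon_poly: "le m m \<Longrightarrow> lead_mon le (mon_poly m) = m"
  unfolding lead_mon_def mon_poly_def by (rule the_equality) auto

lemma mon_poly_in_initial_ideal:
  assumes "mon_poly m \<in> I" and "le m m"
  shows "mon_poly m \<in> initial_ideal n le I"
proof -
  have "mon_poly m \<noteq> 0"
    by (metis mon_poly_def lookup_single_eq lookup_zero zero_neq_one)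
  then have "mon_poly m \<in> {mon_poly (lead_mon le f) | f. f \<in> I \<and> f \<noteq> 0}"
    using assms by (metis (mono_tags, lifting) lead_mon_mon_poly mem_Collect_eq)
  then show ?thesis
    unfolding initial_ideal_def by (rule ideal_gen.gen)
qed

lemma simplicial_complex_squarefree_nonmembers:
  "simplicial_complex {\<tau>. \<tau> \<subseteq> {1..n} \<and> (\<Prod>i\<in>\<tau>. var i) \<notin> ideal_gen n G}"
  unfolding simplicial_complex_def
proof (intro ballI conjI allI impI)
  fix s assume "s \<in> {\<tau>. \<tau> \<subseteq> {1..n} \<and> (\<Prod>i\<in>\<tau>. var i) \<notin> ideal_gen n G}"
  then have s: "s \<subseteq> {1..n}" and s_notin: "(\<Prod>i\<in>s. var i) \<notin> ideal_gen n G"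
    by auto
  show fin: "finite s"
    using s finite_subset by blast
  fix t assume ts: "t \<subseteq> s"
  have "(\<Prod>i\<in>t. var i) \<notin> ideal_gen n G"
  proof
    assume "(\<Prod>i\<in>t. var i) \<in> ideal_gen n G"
    then have "(\<Prod>i\<in>s - t. var i) * (\<Prod>i\<in>t. var i) \<in> ideal_gen n G"
      using s by (intro ideal_gen.mult prod_var_in_polys) auto
    with s_notin show False
      by (metis prod.subset_diff[OF ts fin])
  qed
  with ts s show "t \<in> {\<tau>. \<tau> \<subseteq> {1..n} \<and> (\<Prod>i\<in>\<tau>. var i) \<notin> ideal_gen n G}"
    by auto
qed

lemma prod_var_in_vanishing_ideal_if_dependent:
  assumes down_closed: "\<And>A B. A \<in> \<I> \<Longrightarrow> B \<subseteq> A \<Longrightarrow> B \<in> \<I>"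
    and t: "t \<subseteq> {1..n}" "t \<notin> \<I>"
  shows "(\<Prod>i\<in>t. var i) \<in> vanishing_ideal n (V_M \<I>)"
proof -
  have "eval_poly (\<Prod>i\<in>t. var i) (char_vec B) = 0" if "B \<in> bases \<I>" for B
  proof -
    have "\<not> t \<subseteq> B"
      using that t(2) down_closed by (auto simp: bases_def)
    then show ?thesis
      using eval_prod_var_char_vec[OF finite_subset[OF t(1)]] by simp
  qed
  then show ?thesis
    using prod_var_in_polys[OF t(1)] by (auto simp: vanishing_ideal_def V_M_def)
qed

lemma S_complex_subset:
  assumes "matroid n \<I>" and "term_order n le"
  shows "S_complex n le \<I> \<subseteq> \<I>"
proof
  fix t assume "t \<in> S_complex n le \<I>"
  then have t: "t \<subseteq> {1..n}"
    and t_notin: "(\<Prod>i\<in>t. var i) \<notin> initial_ideal n le (vanishing_ideal n (V_M \<I>))"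
    by (auto simp: S_complex_def)
  have fin: "finite t"
    using t finite_subset by blast
  show "t \<in> \<I>"
  proof (rule ccontr)
    assume "t \<notin> \<I>"
    then have "mon_poly (squarefree_mon t) \<in> vanishing_ideal n (V_M \<I>)"
      using prod_var_in_vanishing_ideal_if_dependent[OF _ t] assms(1)
      by (simp add: matroid_def prod_var_eq_mon_poly[OF fin])
    moreover have "le (squarefree_mon t) (squarefree_mon t)"
      using assms(2) squarefree_mon_in_mons[OF t] by (simp add: term_order_def)
    ultimately have "mon_poly (squarefree_mon t) \<in> initial_ideal n le (vanishing_ideal n (V_M \<I>))"
      by (rule mon_poly_in_initial_ideal)
    with t_notin show False
      by (simp add: prod_var_eq_mon_poly[OF fin])
  qed
qed

theorem corollary2p5:
  fixes n :: nat and \<I> :: "nat set set" and le :: "mon \<Rightarrow> mon \<Rightarrow> bool"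
  assumes "matroid n \<I>" and "term_order n le"
  shows "subcomplex (S_complex n le \<I>) \<I>"
proof -
  have "simplicial_complex (S_complex n le \<I>)"
    unfolding S_complex_def initial_ideal_def
    by (rule simplicial_complex_squarefree_nonmembers)
  then show ?thesis
    using S_complex_subset[OF assms] by (simp add: subcomplex_def)
qed

end
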